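(* Let $\mathcal A=\mathcal A(\mathbb T^2_\theta)$ with the spectral triple and one-form module $\mathcal E$ described below, let $g_0$ be the metric with $g_0(e_i\otimes_{\mathcal A}e_j)=\delta_{ij}1$, let $k\in\mathcal A$ be invertible and $g=kg_0$, and let $\nabla$ be the Levi-Civita connection of $g$ with Christoffel symbols $\Gamma^i_{jk}$. Then $$\mathrm{Ric}(e_1,e_1)=\mathrm{Ric}(e_2,e_2)=-\tfrac12\big(k^{-1}(\partial_1^2+\partial_2^2)(k)+\partial_1(k^{-1})\partial_1(k)+\partial_2(k^{-1})\partial_2(k)\big),$$ $$\mathrm{Ric}(e_1,e_2)=-\mathrm{Ric}(e_2,e_1)=\tfrac12\big(\partial_1(k^{-1})\partial_2(k)-\partial_2(k^{-1})\partial_1(k)\big),$$ $$\mathrm{Scal}=-(\partial_1^2+\partial_2^2)(k)-k\big(\partial_2(k^{-1})\partial_2(k)+\partial_1(k^{-1})\partial_1(k)\big).$$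
   Context: $\mathcal A(\mathbb T^2_\theta)$ is the $*$-algebra generated by unitaries $U,V$ with $UV=e^{2\pi i\theta}VU$; $d_1,d_2$ are the derivations with $d_1U=U,d_1V=0,d_2U=0,d_2V=V$; $\tau$ the canonical faithful trace; $\mathcal H=L^2(\tau)\oplus L^2(\tau)$ with $\mathcal A$ acting diagonally and $D=\begin{pmatrix}0&d_1+id_2\\ d_1-id_2&0\end{pmatrix}$; $d(a)=\sqrt{-1}[D,a]$. The one-form module $\mathcal E$ (span of $a[D,b]$) is free as a right module with central basis $e_1=\begin{pmatrix}0&1\\1&0\end{pmatrix}$, $e_2=\begin{pmatrix}0&i\\-i&0\end{pmatrix}$ (acting on the $\mathbb C^2$ factor), $d(e_1)=d(e_2)=0$, and $d(a)=e_1\partial_1(a)+e_2\partial_2(a)$ where $\partial_1,\partial_2$ are the commuting derivations with $\partial_1U=iU,\partial_1V=0,\partial_2U=0,\partial_2V=iV$. This module satisfies the framework assumptions, with $\sigma(e_i\otimes e_j)=e_j\otimes e_i$ and $m(e_i\otimes e_j)=-m(e_j\otimes e_i)$. Framework: a connection is a $\mathbb C$-linear $\nabla:\mathcal E\to\mathcal E\otimes_{\mathcal A}\mathcal E$ with $\nabla(\omega a)=\nabla(\omega)a+\omega\otimes da$; torsionless if $m\circ\nabla=d$ ($d$ extended to one-forms by $d(\sum a_i\,db_i)=\sum m(da_i\otimes db_i)$); compatible with a metric $g$ if for central $\omega,\eta$: $d(g(\omega\otimes\eta))=(g\otimes\mathrm{id})(\mathrm{id}\otimes\sigma)(\nabla\omega\otimes\eta+\nabla\eta\otimes\omega)$;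 Levi-Civita = torsionless and compatible (it exists uniquely here). Christoffel symbols: $\nabla(e_i)=\sum_{j,l}e_j\otimes e_l\Gamma^i_{jl}$. In this free setting the Ricci curvature is $\mathrm{Ric}=\sum_{j,l}e_j\otimes e_l\,\mathrm{Ric}(e_j,e_l)$ with $\mathrm{Ric}(e_j,e_l)=\sum_i\big[\sum_p(\Gamma^p_{ji}\Gamma^i_{pl}-\Gamma^p_{jl}\Gamma^i_{pi})-\partial_l(\Gamma^i_{ji})+\partial_i(\Gamma^i_{jl})\big]$, and the scalar curvature is $\mathrm{Scal}=\sum_{j,l}g(e_j\otimes e_l)\mathrm{Ric}(e_j,e_l)$. *)

theory Defs
  imports Complex_Main
begin

text \<open>The smooth-free (polynomial) noncommutative torus A(T^2_theta): elements are
  finitely supported coefficient functions f : Z x Z -> C, f standing for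
  sum f(m,n) U^m V^n.  Since U V = e^{2 pi i theta} V U we have
  U^a V^b U^c V^d = e^{-2 pi i theta b c} U^(a+c) V^(b+d).\<close>

type_synonym nct = "int \<times> int \<Rightarrow> complex"

definition nct_alg :: "nct set" where
  "nct_alg = {f. finite {p. f p \<noteq> 0}}"

definition nct_mult :: "real \<Rightarrow> nct \<Rightarrow> nct \<Rightarrow> nct" where
  "nct_mult \<theta> f g = (\<lambda>(m, n). \<Sum>p\<in>{p. f p \<noteq> 0}.
      f p * g (m - fst p, n - snd p)
        * cis (- 2 * pi * \<theta> * of_int (snd p) * of_int (m - fst p)))"

definition nct_one :: nct where
  "nct_one = (\<lambda>p. if p = (0, 0) then 1 else 0)"

definition nct_add :: "nct \<Rightarrow> nct \<Rightarrow> nct" where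
  "nct_add f g = (\<lambda>p. f p + g p)"

definition nct_sub :: "nct \<Rightarrow> nct \<Rightarrow> nct" where
  "nct_sub f g = (\<lambda>p. f p - g p)"

definition nct_smul :: "complex \<Rightarrow> nct \<Rightarrow> nct" where
  "nct_smul c f = (\<lambda>p. c * f p)"

definition nct_sum :: "nat set \<Rightarrow> (nat \<Rightarrow> nct) \<Rightarrow> nct" where
  "nct_sum I F = (\<lambda>p. \<Sum>i\<in>I. F i p)"

text \<open>The commuting derivations: partial_1 U = i U, partial_1 V = 0, partial_2 U = 0, partial_2 V = i V.\<close>
definition nct_d1 :: "nct \<Rightarrow> nct" where
  "nct_d1 f = (\<lambda>(m, n). \<i> * of_int m * f (m, n))"

definition nct_d2 :: "nct \<Rightarrow> nct" where
  "nct_d2 f = (\<lambda>(m, n). \<i> * of_int n * f (m, n))"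

definition nct_der :: "nat \<Rightarrow> nct \<Rightarrow> nct" where
  "nct_der l = (if l = 1 then nct_d1 else nct_d2)"

definition nct_central :: "real \<Rightarrow> nct \<Rightarrow> bool" where
  "nct_central \<theta> x \<longleftrightarrow> x \<in> nct_alg \<and> (\<forall>y\<in>nct_alg. nct_mult \<theta> x y = nct_mult \<theta> y x)"

text \<open>A one-form omega = e_1 a_1 + e_2 a_2 is given by a :: nat => nct
  (indices 1,2); an element of E (x)_A E is sum e_j (x) e_l c_jl.
  The connection with Christoffel symbols Gamma (nabla e_i = sum e_j (x) e_l Gamma^i_jl,
  Gamma i j l = Gamma^i_jl) is, by C-linearity and the Leibniz rule,
  nabla(sum e_i a_i) = sum_i nabla(e_i) a_i + e_i (x) d a_i, with coordinates:\<close>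
definition conn :: "real \<Rightarrow> (nat \<Rightarrow> nat \<Rightarrow> nat \<Rightarrow> nct) \<Rightarrow> (nat \<Rightarrow> nct) \<Rightarrow> nat \<Rightarrow> nat \<Rightarrow> nct" where
  "conn \<theta> \<Gamma> a j l =
     nct_add (nct_sum {1, 2} (\<lambda>i. nct_mult \<theta> (\<Gamma> i j l) (a i))) (nct_der l (a j))"

text \<open>Two-forms: m(e_i (x) e_i) = 0, m(e_2 (x) e_1) = - m(e_1 (x) e_2); a two-form is
  recorded by its coefficient on m(e_1 (x) e_2).
  m(sum e_j (x) e_l c_jl) = m(e_1 (x) e_2)(c_12 - c_21);
  d(sum e_i a_i) = sum_i m(e_i (x) d a_i) = m(e_1 (x) e_2)(partial_2 a_1 - partial_1 a_2).\<close>
definition torsionless :: "real \<Rightarrow> (nat \<Rightarrow> nat \<Rightarrow> nat \<Rightarrow> nct) \<Rightarrow> bool" where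
  "torsionless \<theta> \<Gamma> \<longleftrightarrow>
     (\<forall>a. (\<forall>i\<in>{1, 2}. a i \<in> nct_alg) \<longrightarrow>
        nct_sub (conn \<theta> \<Gamma> a 1 2) (conn \<theta> \<Gamma> a 2 1)
          = nct_sub (nct_der 2 (a 1)) (nct_der 1 (a 2)))"

text \<open>Compatibility with g = k g_0 (g(e_i (x) e_j) = delta_ij k), for central one-forms
  omega = sum e_i a_i, eta = sum e_i b_i (central iff all a_i, b_i central in A):
  d(g(omega (x) eta)) = (g (x) id)(id (x) sigma)(nabla omega (x) eta + nabla eta (x) omega),
  written in coordinates with respect to the basis e_l of E.\<close>
definition metric_compatible :: "real \<Rightarrow> nct \<Rightarrow> (nat \<Rightarrow> nat \<Rightarrow> nat \<Rightarrow> nct) \<Rightarrow> bool" where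
  "metric_compatible \<theta> k \<Gamma> \<longleftrightarrow>
     (\<forall>a b. (\<forall>i\<in>{1, 2}. nct_central \<theta> (a i) \<and> nct_central \<theta> (b i)) \<longrightarrow>
        (\<forall>l\<in>{1, 2}.
          nct_der l (nct_sum {1, 2} (\<lambda>i. nct_mult \<theta> (nct_mult \<theta> k (a i)) (b i)))
          = nct_sum {1, 2} (\<lambda>j. nct_add
               (nct_mult \<theta> k (nct_mult \<theta> (conn \<theta> \<Gamma> a j l) (b j)))
               (nct_mult \<theta> k (nct_mult \<theta> (conn \<theta> \<Gamma> b j l) (a j))))))"

definition levi_civita :: "real \<Rightarrow> nct \<Rightarrow> (nat \<Rightarrow> nat \<Rightarrow> nat \<Rightarrow> nct) \<Rightarrow> bool" where
  "levi_civita \<theta> k \<Gamma> \<longleftrightarrow>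
     (\<forall>i\<in>{1, 2}. \<forall>j\<in>{1, 2}. \<forall>l\<in>{1, 2}. \<Gamma> i j l \<in> nct_alg)
     \<and> torsionless \<theta> \<Gamma> \<and> metric_compatible \<theta> k \<Gamma>"

definition ricci :: "real \<Rightarrow> (nat \<Rightarrow> nat \<Rightarrow> nat \<Rightarrow> nct) \<Rightarrow> nat \<Rightarrow> nat \<Rightarrow> nct" where
  "ricci \<theta> \<Gamma> j l = nct_sum {1, 2} (\<lambda>i.
     nct_add
       (nct_sum {1, 2} (\<lambda>p. nct_sub (nct_mult \<theta> (\<Gamma> p j i) (\<Gamma> i p l))
                                   (nct_mult \<theta> (\<Gamma> p j l) (\<Gamma> i p i))))
       (nct_sub (nct_der i (\<Gamma> i j l)) (nct_der l (\<Gamma> i j i))))"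

definition scalar_curv :: "real \<Rightarrow> nct \<Rightarrow> (nat \<Rightarrow> nat \<Rightarrow> nat \<Rightarrow> nct) \<Rightarrow> nct" where
  "scalar_curv \<theta> k \<Gamma> = nct_sum {1, 2} (\<lambda>j. nct_sum {1, 2} (\<lambda>l.
      nct_mult \<theta> (if j = l then k else (\<lambda>_. 0)) (ricci \<theta> \<Gamma> j l)))"

end

(*
  Torsion-freeness makes the Christoffel symbols symmetric in their lower indices, and
  compatibility with g = k g_0, tested on the central basis e_1, e_2, gives
  k (Gamma^i_jl + Gamma^j_il) = delta_ij d_l k.  Koszul's permutation argument then forces
  Gamma^i_jl = delta_ij c_l + delta_il c_j - delta_jl c_i with c_l = 1/2 k^-1 d_l k,
  the Christoffel symbols of a conformally flat metric.  For symbols of this shape in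
  dimension two the quadratic part of the Ricci tensor cancels even though c_1, c_2 do not
  commute, leaving Ric(e_1,e_1) = Ric(e_2,e_2) = -(d_1 c_1 + d_2 c_2) and
  Ric(e_1,e_2) = -Ric(e_2,e_1) = d_1 c_2 - d_2 c_1; the Leibniz rule gives the stated
  formulas, and Scal = 2 k Ric(e_1,e_1).
*)

theory Submission
  imports Defs "HOL-Library.Product_Plus"
begin

definition nct_twist :: "real \<Rightarrow> int \<times> int \<Rightarrow> int \<times> int \<Rightarrow> complex" where
  "nct_twist \<theta> p q = cis (- 2 * pi * \<theta> * of_int (snd p) * of_int (fst q))"

text \<open>Associativity of the twisted convolution product is this 2-cocycle identity.\<close>
lemma nct_twist_cocycle:
  "nct_twist \<theta> p q * nct_twist \<theta> (p + q) r = nct_twist \<theta> q r * nct_twist \<theta> p (q + r)"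
  unfolding nct_twist_def cis_mult by (simp add: algebra_simps)

lemma nct_twist_zero_left [simp]: "nct_twist \<theta> 0 q = 1"
  by (simp add: nct_twist_def)

lemma nct_twist_zero_right [simp]: "nct_twist \<theta> p 0 = 1"
  by (simp add: nct_twist_def)

lemma nct_mult_apply:
  "nct_mult \<theta> f g x = (\<Sum>p\<in>{p. f p \<noteq> 0}. f p * g (x - p) * nct_twist \<theta> p (x - p))"
proof -
  obtain m n where x: "x = (m, n)" by fastforce
  have "(m, n) - p = (m - fst p, n - snd p)" for p by (simp add: prod_eq_iff)
  then show ?thesis unfolding x by (simp add: nct_mult_def nct_twist_def)
qed

lemma nct_mult_apply_superset:
  assumes "finite S" "{p. f p \<noteq> 0} \<subseteq> S"
  shows "nct_mult \<theta> f g x = (\<Sum>p\<in>S. f p * g (x - p) * nct_twist \<theta> p (x - p))"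
  unfolding nct_mult_apply by (rule sum.mono_neutral_left) (use assms in auto)

lemma sum_translate:
  fixes F :: "'a::ab_group_add \<Rightarrow> 'b::comm_monoid_add"
  assumes "finite T" "(+) p ` S \<subseteq> T" "\<And>q. q \<in> T \<Longrightarrow> q - p \<notin> S \<Longrightarrow> F q = 0"
  shows "(\<Sum>q\<in>T. F q) = (\<Sum>r\<in>S. F (p + r))"
proof -
  have "(\<Sum>q\<in>T. F q) = (\<Sum>q\<in>(+) p ` S. F q)"
  proof (rule sum.mono_neutral_right[OF assms(1,2)], intro ballI)
    fix q assume "q \<in> T - (+) p ` S"
    moreover have "q = p + (q - p)" by simp
    ultimately show "F q = 0" using assms(3) by (metis DiffE imageI)
  qed
  also have "\<dots> = (\<Sum>r\<in>S. F (p + r))" by (simp add: sum.reindex)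
  finally show ?thesis .
qed

lemma nct_mult_support:
  "{x. nct_mult \<theta> f g x \<noteq> 0} \<subseteq> (\<lambda>(p, q). p + q) ` ({p. f p \<noteq> 0} \<times> {q. g q \<noteq> 0})"
proof
  fix x assume "x \<in> {x. nct_mult \<theta> f g x \<noteq> 0}"
  then obtain p where "f p * g (x - p) * nct_twist \<theta> p (x - p) \<noteq> 0"
    unfolding nct_mult_apply mem_Collect_eq by (meson sum.not_neutral_contains_not_neutral)
  then have "(p, x - p) \<in> {p. f p \<noteq> 0} \<times> {q. g q \<noteq> 0}" by simp
  then show "x \<in> (\<lambda>(p, q). p + q) ` ({p. f p \<noteq> 0} \<times> {q. g q \<noteq> 0})"
    by (rule rev_image_eqI) simp
qed

lemma nct_mult_in_alg:
  assumes "f \<in> nct_alg" "g \<in> nct_alg"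
  shows "nct_mult \<theta> f g \<in> nct_alg"
  using finite_subset[OF nct_mult_support] assms unfolding nct_alg_def by simp

lemma nct_smul_in_alg: "f \<in> nct_alg \<Longrightarrow> nct_smul c f \<in> nct_alg"
  unfolding nct_alg_def nct_smul_def by (auto intro: finite_subset)

lemma nct_mult_assoc:
  assumes "f \<in> nct_alg" "g \<in> nct_alg"
  shows "nct_mult \<theta> (nct_mult \<theta> f g) h = nct_mult \<theta> f (nct_mult \<theta> g h)"
proof
  fix x
  define Sf where "Sf = {p. f p \<noteq> 0}"
  define Sg where "Sg = {q. g q \<noteq> 0}"
  define T where "T = (\<lambda>(p, q). p + q) ` (Sf \<times> Sg)"
  have fin: "finite Sf" "finite Sg" "finite T"
    using assms by (simp_all add: Sf_def Sg_def T_def nct_alg_def)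
  have "nct_mult \<theta> (nct_mult \<theta> f g) h x
      = (\<Sum>q\<in>T. (\<Sum>p\<in>Sf. f p * g (q - p) * nct_twist \<theta> p (q - p)) * h (x - q) * nct_twist \<theta> q (x - q))"
    by (subst nct_mult_apply_superset[OF fin(3)])
      (use nct_mult_support[of \<theta> f g] in \<open>simp_all add: nct_mult_apply Sf_def Sg_def T_def\<close>)
  also have "\<dots> = (\<Sum>p\<in>Sf. \<Sum>q\<in>T. f p * g (q - p) * nct_twist \<theta> p (q - p) * h (x - q) * nct_twist \<theta> q (x - q))"
    by (simp add: sum_distrib_right sum.swap[of _ T])
  also have "\<dots> = (\<Sum>p\<in>Sf. \<Sum>r\<in>Sg. f p * g r * h (x - (p + r)) * (nct_twist \<theta> p r * nct_twist \<theta> (p + r) (x - (p + r))))"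
  proof (rule sum.cong[OF refl])
    fix p assume "p \<in> Sf"
    then have "(+) p ` Sg \<subseteq> T" by (auto simp: T_def)
    then show "(\<Sum>q\<in>T. f p * g (q - p) * nct_twist \<theta> p (q - p) * h (x - q) * nct_twist \<theta> q (x - q))
        = (\<Sum>r\<in>Sg. f p * g r * h (x - (p + r)) * (nct_twist \<theta> p r * nct_twist \<theta> (p + r) (x - (p + r))))"
      by (subst sum_translate[OF fin(3)]) (auto simp: Sg_def mult_ac)
  qed
  also have "\<dots> = (\<Sum>p\<in>Sf. f p * (\<Sum>r\<in>Sg. g r * h (x - p - r) * nct_twist \<theta> r (x - p - r)) * nct_twist \<theta> p (x - p))"
    by (simp add: nct_twist_cocycle sum_distrib_left sum_distrib_right diff_diff_eq mult_ac)
  also have "\<dots> = nct_mult \<theta> f (nct_mult \<theta> g h) x"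
    by (simp add: nct_mult_apply Sf_def Sg_def)
  finally show "nct_mult \<theta> (nct_mult \<theta> f g) h x = nct_mult \<theta> f (nct_mult \<theta> g h) x" .
qed

lemma nct_one_apply: "nct_one x = (if x = 0 then 1 else 0)"
  by (simp add: nct_one_def zero_prod_def)

lemma nct_mult_one_left: "nct_mult \<theta> nct_one g = g"
proof
  fix x
  have "{p. nct_one p \<noteq> 0} = {0}" by (simp add: nct_one_apply)
  then show "nct_mult \<theta> nct_one g x = g x"
    by (simp add: nct_mult_apply nct_one_apply)
qed

lemma nct_mult_one_right:
  assumes "f \<in> nct_alg"
  shows "nct_mult \<theta> f nct_one = f"
proof
  fix x
  have "nct_mult \<theta> f nct_one x = (\<Sum>p\<in>{p. f p \<noteq> 0}. if x = p then f p else 0)"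
    by (auto simp: nct_mult_apply nct_one_apply intro!: sum.cong)
  also have "\<dots> = f x" using assms by (simp add: sum.delta' nct_alg_def)
  finally show "nct_mult \<theta> f nct_one x = f x" .
qed

lemma nct_mult_inverse_cancel:
  assumes "k \<in> nct_alg" "kinv \<in> nct_alg" "nct_mult \<theta> kinv k = nct_one"
  shows "nct_mult \<theta> kinv (nct_mult \<theta> k f) = f"
  using assms by (simp add: nct_mult_assoc[symmetric] nct_mult_one_left)

lemma nct_mult_zero_left: "nct_mult \<theta> (\<lambda>_. 0) g = (\<lambda>_. 0)"
  by (simp add: fun_eq_iff nct_mult_apply)

lemma nct_mult_zero_right: "nct_mult \<theta> f (\<lambda>_. 0) = (\<lambda>_. 0)"
  by (simp add: fun_eq_iff nct_mult_apply)

lemma nct_mult_add_right: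
  "nct_mult \<theta> f (nct_add g h) = nct_add (nct_mult \<theta> f g) (nct_mult \<theta> f h)"
  by (simp add: fun_eq_iff nct_mult_apply nct_add_def sum.distrib[symmetric] algebra_simps)

lemma nct_mult_smul_right: "nct_mult \<theta> f (nct_smul c g) = nct_smul c (nct_mult \<theta> f g)"
  by (simp add: fun_eq_iff nct_mult_apply nct_smul_def sum_distrib_left mult_ac)

lemma nct_mult_smul_left:
  assumes "f \<in> nct_alg"
  shows "nct_mult \<theta> (nct_smul c f) g = nct_smul c (nct_mult \<theta> f g)"
proof
  fix x
  have "finite {p. f p \<noteq> 0}" using assms by (simp add: nct_alg_def)
  then show "nct_mult \<theta> (nct_smul c f) g x = nct_smul c (nct_mult \<theta> f g) x"
    unfolding nct_smul_def
    by (subst (1 2) nct_mult_apply_superset[where S = "{p. f p \<noteq> 0}"])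
      (auto simp: sum_distrib_left mult_ac)
qed

lemma nct_der_apply: "nct_der l f x = \<i> * of_int (if l = 1 then fst x else snd x) * f x"
  by (cases x) (simp add: nct_der_def nct_d1_def nct_d2_def)

lemma nct_der_in_alg: "f \<in> nct_alg \<Longrightarrow> nct_der l f \<in> nct_alg"
  unfolding nct_alg_def by (auto simp: nct_der_apply intro: finite_subset)

lemma nct_der_mult:
  assumes "f \<in> nct_alg"
  shows "nct_der l (nct_mult \<theta> f g) = nct_add (nct_mult \<theta> (nct_der l f) g) (nct_mult \<theta> f (nct_der l g))"
proof
  fix x
  have fin: "finite {p. f p \<noteq> 0}" using assms by (simp add: nct_alg_def)
  have weight: "of_int (if l = 1 then fst x else snd x) = (of_int (if l = 1 then fst p else snd p)
      + of_int (if l = 1 then fst (x - p) else snd (x - p)) :: complex)" for p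
    by simp
  show "nct_der l (nct_mult \<theta> f g) x = nct_add (nct_mult \<theta> (nct_der l f) g) (nct_mult \<theta> f (nct_der l g)) x"
    unfolding nct_add_def nct_der_apply[of l _ x]
    by (subst (1 2 3) nct_mult_apply_superset[OF fin])
      (auto simp: nct_der_apply sum_distrib_left sum.distrib[symmetric] weight algebra_simps)
qed

lemma nct_der_smul: "nct_der l (nct_smul c f) = nct_smul c (nct_der l f)"
  by (simp add: fun_eq_iff nct_der_apply nct_smul_def)

lemma nct_der_commute: "nct_der i (nct_der l f) = nct_der l (nct_der i f)"
  by (simp add: fun_eq_iff nct_der_apply)

lemma nct_der_one: "nct_der l nct_one = (\<lambda>_. 0)"
  by (simp add: fun_eq_iff nct_der_apply nct_one_def)

lemma nct_der_zero: "nct_der l (\<lambda>_. 0) = (\<lambda>_. 0)"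
  by (simp add: fun_eq_iff nct_der_apply)

lemma nct_sum_12: "nct_sum {1, 2} F = nct_add (F 1) (F 2)"
  by (simp add: fun_eq_iff nct_sum_def nct_add_def)

lemma nct_add_zero_left [simp]: "nct_add (\<lambda>_. 0) f = f"
  by (simp add: fun_eq_iff nct_add_def)

lemma nct_add_zero_right [simp]: "nct_add f (\<lambda>_. 0) = f"
  by (simp add: fun_eq_iff nct_add_def)

lemma nct_add_commute: "nct_add f g = nct_add g f"
  by (simp add: fun_eq_iff nct_add_def)

lemma nct_central_one: "nct_central \<theta> nct_one"
  by (simp add: nct_central_def nct_one_apply nct_alg_def nct_mult_one_left nct_mult_one_right)

lemma nct_central_zero: "nct_central \<theta> (\<lambda>_. 0)"
  by (simp add: nct_central_def nct_alg_def nct_mult_zero_left nct_mult_zero_right)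

definition nct_basis :: "nat \<Rightarrow> nat \<Rightarrow> nct" where
  "nct_basis m i = (if i = m then nct_one else (\<lambda>_. 0))"

lemma nct_basis_in_alg: "nct_basis m i \<in> nct_alg"
  by (simp add: nct_basis_def nct_alg_def nct_one_apply)

lemma nct_basis_central: "nct_central \<theta> (nct_basis m i)"
  by (simp add: nct_basis_def nct_central_one nct_central_zero)

lemma conn_basis:
  assumes "m \<in> {1, 2}" "\<Gamma> m j l \<in> nct_alg"
  shows "conn \<theta> \<Gamma> (nct_basis m) j l = \<Gamma> m j l"
  unfolding conn_def nct_sum_12 using assms
  by (auto simp: nct_basis_def nct_mult_one_right nct_mult_zero_right nct_der_one nct_der_zero)

lemma torsionless_christoffel_symmetric:
  assumes "torsionless \<theta> \<Gamma>" "\<forall>i\<in>{1, 2}. \<forall>j\<in>{1, 2}. \<forall>l\<in>{1, 2}. \<Gamma> i j l \<in> nct_alg"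
    and "i \<in> {1, 2}" "j \<in> {1, 2}" "l \<in> {1, 2}"
  shows "\<Gamma> i j l = \<Gamma> i l j"
proof -
  have "nct_sub (conn \<theta> \<Gamma> (nct_basis i) 1 2) (conn \<theta> \<Gamma> (nct_basis i) 2 1)
      = nct_sub (nct_der 2 (nct_basis i 1)) (nct_der 1 (nct_basis i 2))"
    using assms(1) nct_basis_in_alg unfolding torsionless_def by blast
  moreover have "conn \<theta> \<Gamma> (nct_basis i) 1 2 = \<Gamma> i 1 2" "conn \<theta> \<Gamma> (nct_basis i) 2 1 = \<Gamma> i 2 1"
    using assms(2,3) by (auto intro!: conn_basis)
  moreover have "nct_der l (nct_basis i j) = (\<lambda>_. 0)" for l j
    by (simp add: nct_basis_def nct_der_one nct_der_zero)
  ultimately have "\<Gamma> i 1 2 = \<Gamma> i 2 1" by (simp add: fun_eq_iff nct_sub_def)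
  then show ?thesis using assms(4,5) by auto
qed

lemma metric_compatible_christoffel:
  assumes "metric_compatible \<theta> k \<Gamma>" "k \<in> nct_alg"
    and "\<forall>i\<in>{1, 2}. \<forall>j\<in>{1, 2}. \<forall>l\<in>{1, 2}. \<Gamma> i j l \<in> nct_alg"
    and "i \<in> {1, 2}" "j \<in> {1, 2}" "l \<in> {1, 2}"
  shows "nct_der l (if i = j then k else (\<lambda>_. 0))
      = nct_add (nct_mult \<theta> k (\<Gamma> i j l)) (nct_mult \<theta> k (\<Gamma> j i l))"
proof -
  have "nct_der l (nct_sum {1, 2} (\<lambda>s. nct_mult \<theta> (nct_mult \<theta> k (nct_basis i s)) (nct_basis j s)))
      = nct_sum {1, 2} (\<lambda>s. nct_add
          (nct_mult \<theta> k (nct_mult \<theta> (conn \<theta> \<Gamma> (nct_basis i) s l) (nct_basis j s)))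
          (nct_mult \<theta> k (nct_mult \<theta> (conn \<theta> \<Gamma> (nct_basis j) s l) (nct_basis i s))))"
    using assms(1,6) nct_basis_central unfolding metric_compatible_def by blast
  moreover have "conn \<theta> \<Gamma> (nct_basis m) s l = \<Gamma> m s l" if "m \<in> {1, 2}" "s \<in> {1, 2}" for m s
    using assms(3,6) that by (auto intro!: conn_basis)
  ultimately show ?thesis
    using assms(2-6) unfolding nct_sum_12
    by (auto simp: nct_basis_def nct_mult_one_right nct_mult_zero_right nct_mult_zero_left
        nct_add_commute)
qed

text \<open>For commuting data and \<open>c = d\<phi>\<close> these are the Christoffel symbols of the metric
  \<open>e\<^sup>2\<^sup>\<phi> \<delta>\<close>; correspondingly \<open>half_log_derivative\<close> is \<open>\<partial>\<^sub>l\<phi>\<close> when \<open>k = e\<^sup>2\<^sup>\<phi>\<close>.\<close>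
definition conformal_christoffel :: "(nat \<Rightarrow> nct) \<Rightarrow> nat \<Rightarrow> nat \<Rightarrow> nat \<Rightarrow> nct" where
  "conformal_christoffel c i j l =
     (\<lambda>x. (if i = j then c l x else 0) + (if i = l then c j x else 0) - (if j = l then c i x else 0))"

definition half_log_derivative :: "real \<Rightarrow> nct \<Rightarrow> nct \<Rightarrow> nat \<Rightarrow> nct" where
  "half_log_derivative \<theta> kinv k l = nct_smul (1 / 2) (nct_mult \<theta> kinv (nct_der l k))"

lemma half_log_derivative_in_alg:
  "k \<in> nct_alg \<Longrightarrow> kinv \<in> nct_alg \<Longrightarrow> half_log_derivative \<theta> kinv k l \<in> nct_alg"
  unfolding half_log_derivative_def by (intro nct_smul_in_alg nct_mult_in_alg nct_der_in_alg)

lemma levi_civita_conformal_christoffel: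
  assumes "k \<in> nct_alg" "kinv \<in> nct_alg" "nct_mult \<theta> kinv k = nct_one" "levi_civita \<theta> k \<Gamma>"
    and "i \<in> {1, 2}" "j \<in> {1, 2}" "l \<in> {1, 2}"
  shows "\<Gamma> i j l = conformal_christoffel (half_log_derivative \<theta> kinv k) i j l"
proof -
  have alg: "\<forall>i\<in>{1, 2}. \<forall>j\<in>{1, 2}. \<forall>l\<in>{1, 2}. \<Gamma> i j l \<in> nct_alg"
    and tors: "torsionless \<theta> \<Gamma>" and compat: "metric_compatible \<theta> k \<Gamma>"
    using assms(4) by (simp_all add: levi_civita_def)
  have sym: "\<Gamma> x y z = \<Gamma> x z y" if "x \<in> {1, 2}" "y \<in> {1, 2}" "z \<in> {1, 2}" for x y z
    using torsionless_christoffel_symmetric[OF tors alg that] .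
  have pair: "nct_add (\<Gamma> x y z) (\<Gamma> y x z)
      = (if x = y then nct_mult \<theta> kinv (nct_der z k) else (\<lambda>_. 0))"
    if "x \<in> {1, 2}" "y \<in> {1, 2}" "z \<in> {1, 2}" for x y z
  proof -
    have "nct_mult \<theta> kinv (nct_der z (if x = y then k else (\<lambda>_. 0)))
        = nct_mult \<theta> kinv (nct_add (nct_mult \<theta> k (\<Gamma> x y z)) (nct_mult \<theta> k (\<Gamma> y x z)))"
      using metric_compatible_christoffel[OF compat assms(1) alg that] by simp
    then show ?thesis
      by (simp add: nct_mult_add_right nct_mult_inverse_cancel[OF assms(1-3)] nct_der_zero
          nct_mult_zero_right split: if_splits)
  qed
  show ?thesis
  proof
    fix x
    have "\<Gamma> y z w x + \<Gamma> z y w x = (if y = z then nct_mult \<theta> kinv (nct_der w k) x else 0)"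
      if "y \<in> {1, 2}" "z \<in> {1, 2}" "w \<in> {1, 2}" for y z w
      using fun_cong[OF pair[OF that], of x] by (simp add: nct_add_def)
    then have pairs: "\<Gamma> i j l x + \<Gamma> j i l x = (if i = j then nct_mult \<theta> kinv (nct_der l k) x else 0)"
      "\<Gamma> i l j x + \<Gamma> l i j x = (if i = l then nct_mult \<theta> kinv (nct_der j k) x else 0)"
      "\<Gamma> j l i x + \<Gamma> l j i x = (if j = l then nct_mult \<theta> kinv (nct_der i k) x else 0)"
      using assms(5-7) by simp_all
    have "\<Gamma> i l j = \<Gamma> i j l" "\<Gamma> j l i = \<Gamma> j i l" "\<Gamma> l j i = \<Gamma> l i j"
      using sym assms(5-7) by auto
    then have "\<Gamma> i j l x
        = ((\<Gamma> i j l x + \<Gamma> j i l x) + (\<Gamma> i l j x + \<Gamma> l i j x) - (\<Gamma> j l i x + \<Gamma> l j i x)) / 2"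
      by (simp add: field_simps)
    also have "\<dots> = ((if i = j then nct_mult \<theta> kinv (nct_der l k) x else 0)
        + (if i = l then nct_mult \<theta> kinv (nct_der j k) x else 0)
        - (if j = l then nct_mult \<theta> kinv (nct_der i k) x else 0)) / 2"
      by (simp only: pairs)
    also have "\<dots> = conformal_christoffel (half_log_derivative \<theta> kinv k) i j l x"
      unfolding conformal_christoffel_def half_log_derivative_def nct_smul_def
      by (cases "i = j"; cases "i = l"; cases "j = l") simp_all
    finally show "\<Gamma> i j l x = conformal_christoffel (half_log_derivative \<theta> kinv k) i j l x" .
  qed
qed

lemma conformal_christoffel_table:
  "conformal_christoffel c 1 1 1 = c 1" "conformal_christoffel c 1 1 2 = c 2"
  "conformal_christoffel c 1 2 1 = c 2" "conformal_christoffel c 1 2 2 = nct_smul (- 1) (c 1)"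
  "conformal_christoffel c 2 1 1 = nct_smul (- 1) (c 2)" "conformal_christoffel c 2 1 2 = c 1"
  "conformal_christoffel c 2 2 1 = c 1" "conformal_christoffel c 2 2 2 = c 2"
  by (simp_all add: fun_eq_iff conformal_christoffel_def nct_smul_def)

lemma ricci_cong:
  assumes "\<forall>i\<in>{1, 2}. \<forall>j\<in>{1, 2}. \<forall>l\<in>{1, 2}. \<Gamma> i j l = \<Gamma>' i j l" "j \<in> {1, 2}" "l \<in> {1, 2}"
  shows "ricci \<theta> \<Gamma> j l = ricci \<theta> \<Gamma>' j l"
  unfolding ricci_def nct_sum_12 using assms by auto

lemma ricci_conformal_christoffel:
  assumes "c 1 \<in> nct_alg" "c 2 \<in> nct_alg"
  shows "ricci \<theta> (conformal_christoffel c) 1 1 = nct_smul (- 1) (nct_add (nct_der 1 (c 1)) (nct_der 2 (c 2)))"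
    and "ricci \<theta> (conformal_christoffel c) 2 2 = ricci \<theta> (conformal_christoffel c) 1 1"
    and "ricci \<theta> (conformal_christoffel c) 1 2 = nct_sub (nct_der 1 (c 2)) (nct_der 2 (c 1))"
    and "ricci \<theta> (conformal_christoffel c) 2 1 = nct_smul (- 1) (ricci \<theta> (conformal_christoffel c) 1 2)"
  unfolding ricci_def nct_sum_12 conformal_christoffel_table
  by (simp_all only: nct_mult_smul_left[OF assms(1)] nct_mult_smul_left[OF assms(2)]
      nct_mult_smul_right nct_der_smul)
    (simp_all add: fun_eq_iff nct_add_def nct_sub_def nct_smul_def algebra_simps)

lemma ricci_conformal_factor:
  assumes "k \<in> nct_alg" "kinv \<in> nct_alg"
  shows "ricci \<theta> (conformal_christoffel (half_log_derivative \<theta> kinv k)) 1 1 = nct_smul (- 1 / 2)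
           (nct_add (nct_add (nct_mult \<theta> kinv (nct_add (nct_d1 (nct_d1 k)) (nct_d2 (nct_d2 k))))
                             (nct_mult \<theta> (nct_d1 kinv) (nct_d1 k)))
                    (nct_mult \<theta> (nct_d2 kinv) (nct_d2 k)))"
    and "ricci \<theta> (conformal_christoffel (half_log_derivative \<theta> kinv k)) 1 2 = nct_smul (1 / 2)
           (nct_sub (nct_mult \<theta> (nct_d1 kinv) (nct_d2 k)) (nct_mult \<theta> (nct_d2 kinv) (nct_d1 k)))"
proof -
  note c_alg = half_log_derivative_in_alg[OF assms]
  have dc: "nct_der i (half_log_derivative \<theta> kinv k l) = nct_smul (1 / 2)
      (nct_add (nct_mult \<theta> (nct_der i kinv) (nct_der l k)) (nct_mult \<theta> kinv (nct_der i (nct_der l k))))"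
    for i l
    unfolding half_log_derivative_def by (simp add: nct_der_smul nct_der_mult assms(2))
  have d: "nct_der 1 = nct_d1" "nct_der 2 = nct_d2" by (simp_all add: nct_der_def)
  show "ricci \<theta> (conformal_christoffel (half_log_derivative \<theta> kinv k)) 1 1 = nct_smul (- 1 / 2)
           (nct_add (nct_add (nct_mult \<theta> kinv (nct_add (nct_d1 (nct_d1 k)) (nct_d2 (nct_d2 k))))
                             (nct_mult \<theta> (nct_d1 kinv) (nct_d1 k)))
                    (nct_mult \<theta> (nct_d2 kinv) (nct_d2 k)))"
    unfolding ricci_conformal_christoffel[OF c_alg c_alg] dc unfolding d nct_mult_add_right
    by (simp add: fun_eq_iff nct_add_def nct_smul_def algebra_simps)
  show "ricci \<theta> (conformal_christoffel (half_log_derivative \<theta> kinv k)) 1 2 = nct_smul (1 / 2)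
           (nct_sub (nct_mult \<theta> (nct_d1 kinv) (nct_d2 k)) (nct_mult \<theta> (nct_d2 kinv) (nct_d1 k)))"
    unfolding ricci_conformal_christoffel[OF c_alg c_alg] dc nct_der_commute[of 2 1] unfolding d
    by (simp add: fun_eq_iff nct_add_def nct_sub_def nct_smul_def algebra_simps)
qed

lemma scalar_curv_diagonal:
  "scalar_curv \<theta> k \<Gamma> = nct_add (nct_mult \<theta> k (ricci \<theta> \<Gamma> 1 1)) (nct_mult \<theta> k (ricci \<theta> \<Gamma> 2 2))"
  unfolding scalar_curv_def nct_sum_12 by (simp add: nct_mult_zero_left)

theorem theorem8p18:
  fixes \<theta> :: real and k kinv :: nct and \<Gamma> :: "nat \<Rightarrow> nat \<Rightarrow> nat \<Rightarrow> nct"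
  assumes "k \<in> nct_alg" and "kinv \<in> nct_alg"
    and "nct_mult \<theta> k kinv = nct_one" and "nct_mult \<theta> kinv k = nct_one"
    and "levi_civita \<theta> k \<Gamma>"
  shows "ricci \<theta> \<Gamma> 1 1 = nct_smul (- 1 / 2)
           (nct_add (nct_add (nct_mult \<theta> kinv (nct_add (nct_d1 (nct_d1 k)) (nct_d2 (nct_d2 k))))
                             (nct_mult \<theta> (nct_d1 kinv) (nct_d1 k)))
                    (nct_mult \<theta> (nct_d2 kinv) (nct_d2 k)))
    \<and> ricci \<theta> \<Gamma> 2 2 = ricci \<theta> \<Gamma> 1 1
    \<and> ricci \<theta> \<Gamma> 1 2 = nct_smul (1 / 2)
           (nct_sub (nct_mult \<theta> (nct_d1 kinv) (nct_d2 k)) (nct_mult \<theta> (nct_d2 kinv) (nct_d1 k)))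
    \<and> ricci \<theta> \<Gamma> 2 1 = nct_smul (- 1) (ricci \<theta> \<Gamma> 1 2)
    \<and> scalar_curv \<theta> k \<Gamma> =
         nct_sub (nct_smul (- 1) (nct_add (nct_d1 (nct_d1 k)) (nct_d2 (nct_d2 k))))
                 (nct_mult \<theta> k (nct_add (nct_mult \<theta> (nct_d2 kinv) (nct_d2 k))
                                        (nct_mult \<theta> (nct_d1 kinv) (nct_d1 k))))"
proof -
  note k = assms(1) and kinv = assms(2)
  have "\<forall>i\<in>{1, 2}. \<forall>j\<in>{1, 2}. \<forall>l\<in>{1, 2}.
      \<Gamma> i j l = conformal_christoffel (half_log_derivative \<theta> kinv k) i j l"
    using levi_civita_conformal_christoffel[OF k kinv assms(4,5)] by blast
  then have ricci_eq: "ricci \<theta> \<Gamma> j l = ricci \<theta> (conformal_christoffel (half_log_derivative \<theta> kinv k)) j l"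
    if "j \<in> {1, 2}" "l \<in> {1, 2}" for j l
    using ricci_cong that by blast
  note c_alg = half_log_derivative_in_alg[OF k kinv]
  have R11: "ricci \<theta> \<Gamma> 1 1 = nct_smul (- 1 / 2)
           (nct_add (nct_add (nct_mult \<theta> kinv (nct_add (nct_d1 (nct_d1 k)) (nct_d2 (nct_d2 k))))
                             (nct_mult \<theta> (nct_d1 kinv) (nct_d1 k)))
                    (nct_mult \<theta> (nct_d2 kinv) (nct_d2 k)))"
    and R12: "ricci \<theta> \<Gamma> 1 2 = nct_smul (1 / 2)
           (nct_sub (nct_mult \<theta> (nct_d1 kinv) (nct_d2 k)) (nct_mult \<theta> (nct_d2 kinv) (nct_d1 k)))"
    using ricci_eq ricci_conformal_factor[OF k kinv] by simp_all
  have R22: "ricci \<theta> \<Gamma> 2 2 = ricci \<theta> \<Gamma> 1 1"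
    and R21: "ricci \<theta> \<Gamma> 2 1 = nct_smul (- 1) (ricci \<theta> \<Gamma> 1 2)"
    using ricci_eq ricci_conformal_christoffel[OF c_alg c_alg] by simp_all
  have "scalar_curv \<theta> k \<Gamma> =
         nct_sub (nct_smul (- 1) (nct_add (nct_d1 (nct_d1 k)) (nct_d2 (nct_d2 k))))
                 (nct_mult \<theta> k (nct_add (nct_mult \<theta> (nct_d2 kinv) (nct_d2 k))
                                        (nct_mult \<theta> (nct_d1 kinv) (nct_d1 k))))"
    unfolding scalar_curv_diagonal R22 R11 nct_mult_smul_right nct_mult_add_right
      nct_mult_inverse_cancel[OF kinv k assms(3)]
    by (simp add: fun_eq_iff nct_add_def nct_sub_def nct_smul_def algebra_simps)
  then show ?thesis using R11 R12 R21 R22 by blast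
qed

end
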